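(* Consider a hybrid market scheme (companies $c$ buy directly at the auction, companies $b$ through intermediaries) and a tax scheme, with $\tau,\lambda,A$ chosen such that the aggregate emissions are identical across all schemes (equal to $A$), and assume $$\Big[\max_b\frac{\mathrm{E}^{\mathrm{bau}}_b}{\varrho_b}-2\lambda\Big]\Big(\sum_c\varrho_c+\tfrac12\sum_b\varrho_b\Big)+\sum_c\mathrm{E}^{\mathrm{bau}}_c+\tfrac12\sum_b\mathrm{E}^{\mathrm{bau}}_b\le A<\sum_c\mathrm{E}^{\mathrm{bau}}_c+\sum_b\Big[\tfrac{\mathrm{E}^{\mathrm{bau}}_b}{2}\vee(\mathrm{E}^{\mathrm{bau}}_b-\lambda\varrho_b)\Big].$$ Then: (Tax) $\tau=(\mathrm{E}^{\mathrm{bau}}-A)/\varrho$; $\mathcal{W}^{\mathrm{tax}}_{\mathrm{C},i}=\mathcal{W}^{\mathrm{bau}}_{\mathrm{C},i}-\tau(\mathrm{E}^{\mathrm{bau}}_i-\tfrac\tau2\varrho_i)$ for every company $i$; $\mathcal{W}^{\mathrm{tax}}_{\mathrm{C}}=\mathcal{W}^{\mathrm{bau}}_{\mathrm{C}}-\tau(\mathrm{E}^{\mathrm{bau}}-\tfrac\tau2\varrho)$ and $\mathcal{W}^{\mathrm{tax}}_{\mathrm{R}}=\tau A$. (Market) For each $c$: $\bm{P_c}(\bm S)=\bm S=\dfrac{2\varrho\tau-\sum_b\mathrm{E}^{\mathrm{bau}}_b}{2\varrho-\sum_b\varrho_b}$ and $\mathcal{W}^{\mathrm{mar}}_{\mathrm{C},c}=\mathcal{W}^{\mathrm{tax}}_{\mathrm{C},c}+\dfrac{\mathrm{E}^{\mathrm{tax}}_c+\mathrm{E}^{\mathrm{mar}}_c}{2\varrho}\sum_b\mathrm{E}^{\mathrm{mar}}_b$.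 For each $b$: $\bm{P_b}(\bm S)=\tfrac\tau2+\tfrac12\big(\tfrac{\mathrm{E}^{\mathrm{bau}}_b}{\varrho_b}-\tfrac1\varrho\sum_\beta\mathrm{E}^{\mathrm{mar}}_\beta\big)$, $\mathcal{W}^{\mathrm{mar}}_{\mathrm{F},b}=(\mathrm{E}^{\mathrm{mar}}_b)^2/\varrho_b$ and $$\mathcal{W}^{\mathrm{mar}}_{\mathrm{C},b}=\mathcal{W}^{\mathrm{tax}}_{\mathrm{C},b}+\frac{\mathrm{E}^{\mathrm{tax}}_b+\mathrm{E}^{\mathrm{mar}}_b}{2\varrho}\sum_\beta\mathrm{E}^{\mathrm{mar}}_\beta-\frac32\mathcal{W}^{\mathrm{mar}}_{\mathrm{F},b}+\frac{\mathrm{E}^{\mathrm{mar}}_b}{2\varrho}\sum_\beta\mathrm{E}^{\mathrm{mar}}_\beta,$$ where $\beta$ runs over the companies buying through intermediaries. Aggregates: $\mathcal{W}^{\mathrm{mar}}_{\mathrm{F}}=\sum_b(\mathrm{E}^{\mathrm{mar}}_b)^2/\varrho_b$, $\mathcal{W}^{\mathrm{mar}}_{\mathrm{C}}=\mathcal{W}^{\mathrm{tax}}_{\mathrm{C}}-\tfrac32\mathcal{W}^{\mathrm{mar}}_{\mathrm{F}}+\tfrac A\varrho\sum_b\mathrm{E}^{\mathrm{mar}}_b+\tfrac{(\sum_b\mathrm{E}^{\mathrm{mar}}_b)^2}{2\varrho}$, $\mathcal{W}^{\mathrm{mar}}_{\mathrm{R}}=\mathcal{W}^{\mathrm{tax}}_{\mathrm{R}}-\tfrac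 A\varrho\sum_b\mathrm{E}^{\mathrm{mar}}_b$.
   Context: Each company $i$ (of either type) has $\pi^0_i,\pi^1_i,\gamma_i>0$, raw wealth $\pi_i(q)=\pi^0_iq-\tfrac{\pi^1_i}2q^2$, emissions $e^{-a}q$ with green cost $\tfrac{\gamma_i}2[(1-e^{-a})q]^2$; $\mathrm{E}^{\mathrm{bau}}_i=\pi^0_i/\pi^1_i$, $\mathcal{W}^{\mathrm{bau}}_{\mathrm{C},i}=(\pi^0_i)^2/(2\pi^1_i)$, $\varrho_i=1/\pi^1_i+1/\gamma_i$; aggregates (no index) are sums over all companies; standing assumption $\tau\varrho_i<\mathrm{E}^{\mathrm{bau}}_i$, $\lambda\varrho_i<\mathrm{E}^{\mathrm{bau}}_i$. Tax: company maximizes $\pi_i(q)-c_i(q,a)-\tau e^{-a}q$; emissions $\mathrm{E}^{\mathrm{tax}}_i$, optimal wealth $\mathcal{W}^{\mathrm{tax}}_{\mathrm{C},i}$; regulator earns $\mathcal{W}^{\mathrm{tax}}_{\mathrm{R}}=\tau\sum_i\mathrm{E}^{\mathrm{tax}}_i$. Market: company facing price $P$ maximizes $\pi_i(q)-c_i(q,a)-\delta P-\lambda(e^{-a}q-\delta)^+$, with demand $\bm{\delta_i}(P)=\mathrm{E}^{\mathrm{bau}}_i-P\varrho_i$, emissions $\mathrm{E}^{\mathrm{mar}}_i$ and wealth $\mathcal{W}^{\mathrm{mar}}_{\mathrm{C},i}$. Direct buyers face $\bm{P_c}(S)=S$; intermediary of $b$ buys at $S$, sets $\bm{P_b}(S)=\arg\max_{P\in[S,\lambda]}\bm{\delta_b}(P)(P-S)$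 and earns $\mathcal{W}^{\mathrm{mar}}_{\mathrm{F},b}=\bm{\delta_b}(\bm{P_b})(\bm{P_b}-S)$. Equilibrium $\bm S$ solves $A=\sum_c\bm{\delta_c}(\bm S)+\sum_b\bm{\delta_b}(\bm{P_b}(\bm S))$. Regulator earns $\mathcal{W}^{\mathrm{mar}}_{\mathrm{R}}=\lambda\sum_i(\mathrm{E}^{\mathrm{mar}}_i-\bm{\delta_i})^++\bm SA$. $x\vee y=\max(x,y)$. *)

theory Defs
  imports Complex_Main
begin

text \<open>Company parameters are given as functions of the company index:
  p0 i = pi^0_i, p1 i = pi^1_i, g i = gamma_i.\<close>

definition Ebau :: "('i \<Rightarrow> real) \<Rightarrow> ('i \<Rightarrow> real) \<Rightarrow> 'i \<Rightarrow> real" where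
  "Ebau p0 p1 i = p0 i / p1 i"

definition WbauC :: "('i \<Rightarrow> real) \<Rightarrow> ('i \<Rightarrow> real) \<Rightarrow> 'i \<Rightarrow> real" where
  "WbauC p0 p1 i = (p0 i)^2 / (2 * p1 i)"

definition rho :: "('i \<Rightarrow> real) \<Rightarrow> ('i \<Rightarrow> real) \<Rightarrow> 'i \<Rightarrow> real" where
  "rho p1 g i = 1 / p1 i + 1 / g i"

definition raw_wealth :: "('i \<Rightarrow> real) \<Rightarrow> ('i \<Rightarrow> real) \<Rightarrow> 'i \<Rightarrow> real \<Rightarrow> real" where
  "raw_wealth p0 p1 i q = p0 i * q - p1 i / 2 * q^2"

definition green_cost :: "('i \<Rightarrow> real) \<Rightarrow> 'i \<Rightarrow> real \<Rightarrow> real \<Rightarrow> real" where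
  "green_cost g i q a = g i / 2 * ((1 - exp (- a)) * q)^2"

text \<open>Tax scheme: company i maximizes over production q >= 0 and abatement a >= 0.\<close>
definition tax_obj :: "('i \<Rightarrow> real) \<Rightarrow> ('i \<Rightarrow> real) \<Rightarrow> ('i \<Rightarrow> real) \<Rightarrow> real \<Rightarrow> 'i \<Rightarrow> real \<Rightarrow> real \<Rightarrow> real" where
  "tax_obj p0 p1 g tau i q a = raw_wealth p0 p1 i q - green_cost g i q a - tau * exp (- a) * q"

definition tax_opt :: "('i \<Rightarrow> real) \<Rightarrow> ('i \<Rightarrow> real) \<Rightarrow> ('i \<Rightarrow> real) \<Rightarrow> real \<Rightarrow> 'i \<Rightarrow> real \<Rightarrow> real \<Rightarrow> bool" where
  "tax_opt p0 p1 g tau i q a \<longleftrightarrow> 0 \<le> q \<and> 0 \<le> a \<and>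
     (\<forall>q' a'. 0 \<le> q' \<and> 0 \<le> a' \<longrightarrow> tax_obj p0 p1 g tau i q' a' \<le> tax_obj p0 p1 g tau i q a)"

definition Etax :: "('i \<Rightarrow> real) \<Rightarrow> ('i \<Rightarrow> real) \<Rightarrow> ('i \<Rightarrow> real) \<Rightarrow> real \<Rightarrow> 'i \<Rightarrow> real" where
  "Etax p0 p1 g tau i = (THE e. \<exists>q a. tax_opt p0 p1 g tau i q a \<and> e = exp (- a) * q)"

definition WtaxC :: "('i \<Rightarrow> real) \<Rightarrow> ('i \<Rightarrow> real) \<Rightarrow> ('i \<Rightarrow> real) \<Rightarrow> real \<Rightarrow> 'i \<Rightarrow> real" where
  "WtaxC p0 p1 g tau i = (THE w. \<exists>q a. tax_opt p0 p1 g tau i q a \<and> w = tax_obj p0 p1 g tau i q a)"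

text \<open>Market scheme: company i facing allowance price P maximizes over q >= 0, a >= 0 and
  purchased allowances delta >= 0, with penalty lam per unit of uncovered emissions.\<close>
definition mar_obj :: "('i \<Rightarrow> real) \<Rightarrow> ('i \<Rightarrow> real) \<Rightarrow> ('i \<Rightarrow> real) \<Rightarrow> real \<Rightarrow> real \<Rightarrow> 'i \<Rightarrow> real \<Rightarrow> real \<Rightarrow> real \<Rightarrow> real" where
  "mar_obj p0 p1 g lam P i q a d = raw_wealth p0 p1 i q - green_cost g i q a - d * P
      - lam * max (exp (- a) * q - d) 0"

definition mar_opt :: "('i \<Rightarrow> real) \<Rightarrow> ('i \<Rightarrow> real) \<Rightarrow> ('i \<Rightarrow> real) \<Rightarrow> real \<Rightarrow> real \<Rightarrow> 'i \<Rightarrow> real \<Rightarrow> real \<Rightarrow> real \<Rightarrow> bool" where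
  "mar_opt p0 p1 g lam P i q a d \<longleftrightarrow> 0 \<le> q \<and> 0 \<le> a \<and> 0 \<le> d \<and>
     (\<forall>q' a' d'. 0 \<le> q' \<and> 0 \<le> a' \<and> 0 \<le> d' \<longrightarrow>
        mar_obj p0 p1 g lam P i q' a' d' \<le> mar_obj p0 p1 g lam P i q a d)"

definition Emar :: "('i \<Rightarrow> real) \<Rightarrow> ('i \<Rightarrow> real) \<Rightarrow> ('i \<Rightarrow> real) \<Rightarrow> real \<Rightarrow> real \<Rightarrow> 'i \<Rightarrow> real" where
  "Emar p0 p1 g lam P i = (THE e. \<exists>q a d. mar_opt p0 p1 g lam P i q a d \<and> e = exp (- a) * q)"

definition WmarC :: "('i \<Rightarrow> real) \<Rightarrow> ('i \<Rightarrow> real) \<Rightarrow> ('i \<Rightarrow> real) \<Rightarrow> real \<Rightarrow> real \<Rightarrow> 'i \<Rightarrow> real" where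
  "WmarC p0 p1 g lam P i = (THE w. \<exists>q a d. mar_opt p0 p1 g lam P i q a d \<and> w = mar_obj p0 p1 g lam P i q a d)"

definition demand :: "('i \<Rightarrow> real) \<Rightarrow> ('i \<Rightarrow> real) \<Rightarrow> ('i \<Rightarrow> real) \<Rightarrow> real \<Rightarrow> 'i \<Rightarrow> real" where
  "demand p0 p1 g P i = Ebau p0 p1 i - P * rho p1 g i"

definition Pint :: "('i \<Rightarrow> real) \<Rightarrow> ('i \<Rightarrow> real) \<Rightarrow> ('i \<Rightarrow> real) \<Rightarrow> real \<Rightarrow> real \<Rightarrow> 'i \<Rightarrow> real" where
  "Pint p0 p1 g lam S b = (THE P. S \<le> P \<and> P \<le> lam \<and>
     (\<forall>P'. S \<le> P' \<and> P' \<le> lam \<longrightarrow> demand p0 p1 g P' b * (P' - S) \<le> demand p0 p1 g P b * (P - S)))"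

definition WmarF :: "('i \<Rightarrow> real) \<Rightarrow> ('i \<Rightarrow> real) \<Rightarrow> ('i \<Rightarrow> real) \<Rightarrow> real \<Rightarrow> real \<Rightarrow> 'i \<Rightarrow> real" where
  "WmarF p0 p1 g lam S b = demand p0 p1 g (Pint p0 p1 g lam S b) b * (Pint p0 p1 g lam S b - S)"

definition Pface :: "'i set \<Rightarrow> ('i \<Rightarrow> real) \<Rightarrow> ('i \<Rightarrow> real) \<Rightarrow> ('i \<Rightarrow> real) \<Rightarrow> real \<Rightarrow> real \<Rightarrow> 'i \<Rightarrow> real" where
  "Pface Bs p0 p1 g lam S i = (if i \<in> Bs then Pint p0 p1 g lam S i else S)"

definition is_equilibrium :: "'i set \<Rightarrow> 'i set \<Rightarrow> ('i \<Rightarrow> real) \<Rightarrow> ('i \<Rightarrow> real) \<Rightarrow> ('i \<Rightarrow> real) \<Rightarrow> real \<Rightarrow> real \<Rightarrow> real \<Rightarrow> bool" where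
  "is_equilibrium Cs Bs p0 p1 g lam A S \<longleftrightarrow>
     A = (\<Sum>c\<in>Cs. demand p0 p1 g S c) + (\<Sum>b\<in>Bs. demand p0 p1 g (Pint p0 p1 g lam S b) b)"

definition WtaxR :: "'i set \<Rightarrow> ('i \<Rightarrow> real) \<Rightarrow> ('i \<Rightarrow> real) \<Rightarrow> ('i \<Rightarrow> real) \<Rightarrow> real \<Rightarrow> real" where
  "WtaxR I p0 p1 g tau = tau * (\<Sum>i\<in>I. Etax p0 p1 g tau i)"

definition WmarR :: "'i set \<Rightarrow> 'i set \<Rightarrow> ('i \<Rightarrow> real) \<Rightarrow> ('i \<Rightarrow> real) \<Rightarrow> ('i \<Rightarrow> real) \<Rightarrow> real \<Rightarrow> real \<Rightarrow> real \<Rightarrow> real" where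
  "WmarR I Bs p0 p1 g lam A S =
     lam * (\<Sum>i\<in>I. max (Emar p0 p1 g lam (Pface Bs p0 p1 g lam S i) i
                         - demand p0 p1 g (Pface Bs p0 p1 g lam S i) i) 0) + S * A"

end

theory Submission
  imports Defs
begin

(*
  Each company's problem is a concave quadratic once squares are completed: under a tax
  rate tau >= 0 company i emits Ebau_i - tau rho_i and keeps Wbau_i - tau (Ebau_i - tau rho_i / 2),
  and a company facing an allowance price P <= lam behaves exactly as under the tax P, since
  covering all its emissions with allowances is optimal. An intermediary buying at S maximises a
  concave quadratic in its price and charges min ((Ebau_b / rho_b + S) / 2) lam. The lower bound
  on A forces S <= 2 lam - max_b Ebau_b / rho_b, so this minimum is the interior one and company b
  emits (Ebau_b - S rho_b) / 2; the upper bound gives A < Ebau, hence tau > 0. Equal aggregate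
  emissions then yield tau = S + (sum_b Emar_b) / rho, and all formulas follow by algebra.
*)

lemma tax_obj_completed_square:
  assumes "p1 i \<noteq> 0" "g i \<noteq> 0"
  shows "tax_obj p0 p1 g tau i q a =
    WbauC p0 p1 i - tau * (Ebau p0 p1 i - tau / 2 * rho p1 g i)
    - p1 i / 2 * (q - (p0 i - tau) / p1 i)\<^sup>2 - g i / 2 * ((1 - exp (- a)) * q - tau / g i)\<^sup>2"
  using assms unfolding tax_obj_def raw_wealth_def green_cost_def WbauC_def Ebau_def rho_def
  by (simp add: field_simps power2_eq_square)

lemma tax_obj_le:
  assumes "0 < p1 i" "0 < g i"
  shows "tax_obj p0 p1 g tau i q a \<le> WbauC p0 p1 i - tau * (Ebau p0 p1 i - tau / 2 * rho p1 g i)"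
proof -
  have "0 \<le> p1 i / 2 * (q - (p0 i - tau) / p1 i)\<^sup>2"
    and "0 \<le> g i / 2 * ((1 - exp (- a)) * q - tau / g i)\<^sup>2"
    using assms by simp_all
  then show ?thesis
    using assms by (simp only: tax_obj_completed_square)
qed

lemma tax_obj_eq_max_iff:
  assumes "0 < p1 i" "0 < g i"
  shows "tax_obj p0 p1 g tau i q a = WbauC p0 p1 i - tau * (Ebau p0 p1 i - tau / 2 * rho p1 g i)
    \<longleftrightarrow> q = (p0 i - tau) / p1 i \<and> (1 - exp (- a)) * q = tau / g i"
proof -
  define x where "x = p1 i / 2 * (q - (p0 i - tau) / p1 i)\<^sup>2"
  define y where "y = g i / 2 * ((1 - exp (- a)) * q - tau / g i)\<^sup>2"
  have "0 \<le> x" "0 \<le> y" using assms by (simp_all add: x_def y_def)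
  then have "tax_obj p0 p1 g tau i q a = WbauC p0 p1 i - tau * (Ebau p0 p1 i - tau / 2 * rho p1 g i)
      \<longleftrightarrow> x = 0 \<and> y = 0"
    using assms by (simp only: tax_obj_completed_square flip: x_def y_def) linarith
  also have "\<dots> \<longleftrightarrow> q = (p0 i - tau) / p1 i \<and> (1 - exp (- a)) * q = tau / g i"
    using assms by (simp add: x_def y_def)
  finally show ?thesis .
qed

lemma tax_max_attained_nonneg_rate:
  assumes "0 < p1 i" "0 < g i" "0 \<le> tau" "tau * rho p1 g i < Ebau p0 p1 i"
  shows "\<exists>q a. 0 \<le> q \<and> 0 \<le> a
    \<and> tax_obj p0 p1 g tau i q a = WbauC p0 p1 i - tau * (Ebau p0 p1 i - tau / 2 * rho p1 g i)"
proof -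
  define e where "e = Ebau p0 p1 i - tau * rho p1 g i"
  define q where "q = (p0 i - tau) / p1 i"
  have "0 < e" "0 \<le> tau / g i" using assms by (simp_all add: e_def)
  moreover have q_eq: "q = e + tau / g i"
    using assms by (simp add: q_def e_def Ebau_def rho_def field_simps)
  ultimately have "0 < q" "e \<le> q" by linarith+
  define a where "a = ln (q / e)"
  have "0 \<le> a" using \<open>0 < e\<close> \<open>e \<le> q\<close> by (simp add: a_def)
  have "exp (- a) * q = e"
    using \<open>0 < e\<close> \<open>0 < q\<close> by (simp add: a_def exp_diff ln_div)
  then have "(1 - exp (- a)) * q = tau / g i"
    using q_eq by (simp add: left_diff_distrib)
  then have "tax_obj p0 p1 g tau i q a = WbauC p0 p1 i - tau * (Ebau p0 p1 i - tau / 2 * rho p1 g i)"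
    using tax_obj_eq_max_iff[of p1 i g, OF assms(1,2)] by (simp add: q_def)
  with \<open>0 < q\<close> \<open>0 \<le> a\<close> show ?thesis by (meson less_imp_le)
qed

lemma tax_opt_iff_nonneg_rate:
  assumes "0 < p1 i" "0 < g i" "0 \<le> tau" "tau * rho p1 g i < Ebau p0 p1 i"
  shows "tax_opt p0 p1 g tau i q a \<longleftrightarrow> 0 \<le> q \<and> 0 \<le> a
    \<and> tax_obj p0 p1 g tau i q a = WbauC p0 p1 i - tau * (Ebau p0 p1 i - tau / 2 * rho p1 g i)"
proof -
  obtain q' a' where "0 \<le> q'" "0 \<le> a'"
    "tax_obj p0 p1 g tau i q' a' = WbauC p0 p1 i - tau * (Ebau p0 p1 i - tau / 2 * rho p1 g i)"
    using tax_max_attained_nonneg_rate[OF assms] by blast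
  then show ?thesis
    using tax_obj_le[of p1 i g, OF assms(1,2)] unfolding tax_opt_def by (metis antisym)
qed

lemma the_optimal_value:
  assumes "P x0 y0" "\<And>x y. P x y \<Longrightarrow> f x y = v"
  shows "(THE w. \<exists>x y. P x y \<and> w = f x y) = v"
  using assms by (intro the_equality) (metis, blast)

lemma
  assumes "0 < p1 i" "0 < g i" "0 \<le> tau" "tau * rho p1 g i < Ebau p0 p1 i"
  shows Etax_nonneg_rate: "Etax p0 p1 g tau i = Ebau p0 p1 i - tau * rho p1 g i"
    and WtaxC_nonneg_rate:
      "WtaxC p0 p1 g tau i = WbauC p0 p1 i - tau * (Ebau p0 p1 i - tau / 2 * rho p1 g i)"
proof -
  let ?V = "WbauC p0 p1 i - tau * (Ebau p0 p1 i - tau / 2 * rho p1 g i)"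
  obtain q a where "tax_opt p0 p1 g tau i q a"
    using tax_max_attained_nonneg_rate[OF assms] unfolding tax_opt_iff_nonneg_rate[OF assms] by blast
  moreover have "exp (- a) * q = Ebau p0 p1 i - tau * rho p1 g i \<and> tax_obj p0 p1 g tau i q a = ?V"
    if "tax_opt p0 p1 g tau i q a" for q a
  proof
    show max: "tax_obj p0 p1 g tau i q a = ?V"
      using that unfolding tax_opt_iff_nonneg_rate[OF assms] by blast
    have q: "q = (p0 i - tau) / p1 i" and abated: "(1 - exp (- a)) * q = tau / g i"
      using max unfolding tax_obj_eq_max_iff[of p1 i g, OF assms(1,2)] by blast+
    have "exp (- a) * q = q - tau / g i"
      using abated by (simp add: algebra_simps)
    also have "\<dots> = Ebau p0 p1 i - tau * rho p1 g i"
      using assms(1,2) by (simp add: q Ebau_def rho_def field_simps)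
    finally show "exp (- a) * q = Ebau p0 p1 i - tau * rho p1 g i" .
  qed
  ultimately show "Etax p0 p1 g tau i = Ebau p0 p1 i - tau * rho p1 g i"
    and "WtaxC p0 p1 g tau i = ?V"
    unfolding Etax_def WtaxC_def by (auto intro: the_optimal_value)
qed

lemma Etax_nonpos_rate:
  assumes "0 < p0 i" "0 < p1 i" "0 < g i" "tau \<le> 0"
  shows "Etax p0 p1 g tau i = Ebau p0 p1 i - tau / p1 i"
proof -
  define q0 where "q0 = (p0 i - tau) / p1 i"
  define V where "V = (p0 i - tau)\<^sup>2 / (2 * p1 i)"
  define loss where "loss q a = p1 i / 2 * (q - q0)\<^sup>2
      + (g i / 2 * ((1 - exp (- a)) * q)\<^sup>2 - tau * ((1 - exp (- a)) * q))" for q a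
  have obj: "tax_obj p0 p1 g tau i q a = V - loss q a" for q a
    using assms(2) unfolding tax_obj_def raw_wealth_def green_cost_def V_def loss_def q0_def
    by (simp add: field_simps power2_eq_square)
  have loss_eq_0: "loss q a = 0 \<longleftrightarrow> q = q0 \<and> exp (- a) * q = q" and loss_nonneg: "0 \<le> loss q a"
    if "0 \<le> q" "0 \<le> a" for q a
  proof -
    define y where "y = (1 - exp (- a)) * q"
    have "0 \<le> y" using that by (simp add: y_def)
    then have "0 \<le> - tau * y" using assms(4) by (simp add: mult_nonpos_nonneg)
    moreover have "0 \<le> p1 i / 2 * (q - q0)\<^sup>2" "0 \<le> g i / 2 * y\<^sup>2"
      using assms by simp_all
    moreover have "loss q a = p1 i / 2 * (q - q0)\<^sup>2 + g i / 2 * y\<^sup>2 + - tau * y"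
      by (simp add: loss_def y_def)
    ultimately have "0 \<le> loss q a"
      and "loss q a = 0 \<longleftrightarrow> p1 i / 2 * (q - q0)\<^sup>2 = 0 \<and> g i / 2 * y\<^sup>2 = 0 \<and> - tau * y = 0"
      by linarith+
    then show "0 \<le> loss q a" "loss q a = 0 \<longleftrightarrow> q = q0 \<and> exp (- a) * q = q"
      using assms(2,3) by (auto simp: y_def algebra_simps)
  qed
  have "0 < q0" using assms by (simp add: q0_def)
  have "loss q0 0 = 0" by (simp add: loss_def)
  have "tax_opt p0 p1 g tau i q a \<longleftrightarrow> 0 \<le> q \<and> 0 \<le> a \<and> loss q a = 0" for q a
  proof -
    have "tax_opt p0 p1 g tau i q a
        \<longleftrightarrow> 0 \<le> q \<and> 0 \<le> a \<and> (\<forall>q' a'. 0 \<le> q' \<and> 0 \<le> a' \<longrightarrow> loss q a \<le> loss q' a')"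
      unfolding tax_opt_def obj by simp
    then show ?thesis
      using \<open>loss q0 0 = 0\<close> \<open>0 < q0\<close> loss_nonneg by (metis antisym less_imp_le order.refl)
  qed
  then have "Etax p0 p1 g tau i = q0"
    unfolding Etax_def using loss_eq_0 \<open>0 < q0\<close> by (intro the_optimal_value[of _ q0 0]) auto
  then show ?thesis
    using assms(2) by (simp add: q0_def Ebau_def diff_divide_distrib)
qed

lemma mar_obj_le_tax_obj:
  assumes "0 \<le> P" "P \<le> lam" "0 \<le> d"
  shows "mar_obj p0 p1 g lam P i q a d \<le> tax_obj p0 p1 g P i q a"
proof -
  have "P * x \<le> d * P + lam * max (x - d) 0" for x
  proof (cases "d \<le> x")
    case True
    then have "P * (x - d) \<le> lam * (x - d)" using assms(2) by (simp add: mult_right_mono)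
    then show ?thesis using True by (simp add: algebra_simps)
  next
    case False
    then have "P * x \<le> P * d" using assms(1) by (simp add: mult_left_mono)
    then show ?thesis using False by (simp add: algebra_simps)
  qed
  from this[of "exp (- a) * q"] show ?thesis
    unfolding mar_obj_def tax_obj_def by (simp add: mult.assoc)
qed

lemma mar_obj_full_cover: "mar_obj p0 p1 g lam P i q a (exp (- a) * q) = tax_obj p0 p1 g P i q a"
  unfolding mar_obj_def tax_obj_def by (simp add: algebra_simps)

lemma mar_opt_iff_tax_opt:
  assumes "0 \<le> P" "P \<le> lam"
  shows "mar_opt p0 p1 g lam P i q a d \<longleftrightarrow>
    tax_opt p0 p1 g P i q a \<and> 0 \<le> d \<and> mar_obj p0 p1 g lam P i q a d = tax_obj p0 p1 g P i q a"
proof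
  assume opt: "mar_opt p0 p1 g lam P i q a d"
  then have qad: "0 \<le> q" "0 \<le> a" "0 \<le> d" by (simp_all add: mar_opt_def)
  have "tax_obj p0 p1 g P i q' a' \<le> mar_obj p0 p1 g lam P i q a d" if "0 \<le> q'" "0 \<le> a'" for q' a'
    using opt that mar_obj_full_cover[of p0 p1 g lam P i q' a'] unfolding mar_opt_def
    by (metis exp_ge_zero mult_nonneg_nonneg)
  moreover note mar_obj_le_tax_obj[OF assms qad(3), of p0 p1 g i q a]
  ultimately show "tax_opt p0 p1 g P i q a \<and> 0 \<le> d
      \<and> mar_obj p0 p1 g lam P i q a d = tax_obj p0 p1 g P i q a"
    using qad unfolding tax_opt_def by (meson antisym order_trans)
next
  assume opt: "tax_opt p0 p1 g P i q a \<and> 0 \<le> d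
    \<and> mar_obj p0 p1 g lam P i q a d = tax_obj p0 p1 g P i q a"
  then have "mar_obj p0 p1 g lam P i q' a' d' \<le> mar_obj p0 p1 g lam P i q a d"
    if "0 \<le> q'" "0 \<le> a'" "0 \<le> d'" for q' a' d'
    using that mar_obj_le_tax_obj[OF assms that(3), of p0 p1 g i q' a'] unfolding tax_opt_def
    by (metis order_trans)
  then show "mar_opt p0 p1 g lam P i q a d"
    using opt unfolding mar_opt_def tax_opt_def by blast
qed

lemma
  assumes "0 \<le> P" "P \<le> lam"
  shows Emar_eq_Etax: "Emar p0 p1 g lam P i = Etax p0 p1 g P i"
    and WmarC_eq_WtaxC: "WmarC p0 p1 g lam P i = WtaxC p0 p1 g P i"
proof -
  have cover: "tax_opt p0 p1 g P i q a \<Longrightarrow> mar_opt p0 p1 g lam P i q a (exp (- a) * q)" for q a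
    unfolding mar_opt_iff_tax_opt[OF assms] mar_obj_full_cover by (simp add: tax_opt_def)
  show "Emar p0 p1 g lam P i = Etax p0 p1 g P i"
    unfolding Emar_def Etax_def using cover mar_opt_iff_tax_opt[OF assms] by metis
  show "WmarC p0 p1 g lam P i = WtaxC p0 p1 g P i"
    unfolding WmarC_def WtaxC_def using cover mar_opt_iff_tax_opt[OF assms] mar_obj_full_cover by metis
qed

lemma sq_dist_min_le:
  fixes c h P :: real
  assumes "P \<le> h"
  shows "(min c h - c)\<^sup>2 \<le> (P - c)\<^sup>2"
proof (cases "c \<le> h")
  case False
  then have "(c - h)\<^sup>2 \<le> (c - P)\<^sup>2" using assms by (intro power_mono) auto
  then show ?thesis using False by (simp add: power2_commute)
qed simp

lemma sq_dist_le_min_iff: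
  fixes c h P :: real
  assumes "P \<le> h"
  shows "(P - c)\<^sup>2 \<le> (min c h - c)\<^sup>2 \<longleftrightarrow> P = min c h"
proof
  assume le: "(P - c)\<^sup>2 \<le> (min c h - c)\<^sup>2"
  show "P = min c h"
  proof (cases "c \<le> h")
    case False
    then have "(P - c)\<^sup>2 \<le> (h - c)\<^sup>2" using le by simp
    then have "\<bar>P - c\<bar> \<le> \<bar>h - c\<bar>" by (simp only: abs_le_square_iff)
    then show ?thesis using False assms by auto
  qed (use le in simp)
qed simp

lemma intermediary_profit_completed_square:
  assumes "rho p1 g b \<noteq> 0"
  shows "demand p0 p1 g P b * (P - S) =
    rho p1 g b * ((Ebau p0 p1 b / rho p1 g b - S) / 2)\<^sup>2
    - rho p1 g b * (P - (Ebau p0 p1 b / rho p1 g b + S) / 2)\<^sup>2"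
  using assms unfolding demand_def by (simp add: field_simps power2_eq_square)

lemma Pint_eq_min:
  assumes "0 < rho p1 g b" "S \<le> lam" "lam * rho p1 g b < Ebau p0 p1 b"
  shows "Pint p0 p1 g lam S b = min ((Ebau p0 p1 b / rho p1 g b + S) / 2) lam"
proof -
  define c where "c = (Ebau p0 p1 b / rho p1 g b + S) / 2"
  have "lam < Ebau p0 p1 b / rho p1 g b" using assms by (simp add: field_simps)
  then have "S \<le> c" using assms(2) by (simp add: c_def)
  have profit_le_iff: "demand p0 p1 g P' b * (P' - S) \<le> demand p0 p1 g P b * (P - S)
      \<longleftrightarrow> (P - c)\<^sup>2 \<le> (P' - c)\<^sup>2" for P P'
    using assms(1) by (simp add: intermediary_profit_completed_square flip: c_def)
  show ?thesis
    unfolding Pint_def profit_le_iff c_def[symmetric]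
  proof (rule the_equality)
    show "S \<le> min c lam \<and> min c lam \<le> lam
        \<and> (\<forall>P'. S \<le> P' \<and> P' \<le> lam \<longrightarrow> (min c lam - c)\<^sup>2 \<le> (P' - c)\<^sup>2)"
      using \<open>S \<le> c\<close> assms(2) sq_dist_min_le by auto
  next
    fix P
    assume "S \<le> P \<and> P \<le> lam \<and> (\<forall>P'. S \<le> P' \<and> P' \<le> lam \<longrightarrow> (P - c)\<^sup>2 \<le> (P' - c)\<^sup>2)"
    moreover have "S \<le> min c lam" "min c lam \<le> lam" using \<open>S \<le> c\<close> assms(2) by auto
    ultimately show "P = min c lam" using sq_dist_le_min_iff by blast
  qed
qed

lemma
  assumes "0 < p1 i" "0 < g i" "0 \<le> P" "P \<le> lam" "lam * rho p1 g i < Ebau p0 p1 i"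
  shows Emar_eq_demand: "Emar p0 p1 g lam P i = demand p0 p1 g P i"
    and WmarC_eq: "WmarC p0 p1 g lam P i = WbauC p0 p1 i - P * (Ebau p0 p1 i - P / 2 * rho p1 g i)"
proof -
  have "P * rho p1 g i \<le> lam * rho p1 g i"
    using assms by (intro mult_right_mono) (simp_all add: rho_def)
  then have "P * rho p1 g i < Ebau p0 p1 i" using assms(5) by linarith
  then show "Emar p0 p1 g lam P i = demand p0 p1 g P i"
    and "WmarC p0 p1 g lam P i = WbauC p0 p1 i - P * (Ebau p0 p1 i - P / 2 * rho p1 g i)"
    using assms by (simp_all add: Emar_eq_Etax WmarC_eq_WtaxC Etax_nonneg_rate WtaxC_nonneg_rate demand_def)
qed

lemma wealth_change_of_rate:
  fixes W E r s t :: real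
  shows "W - s * (E - s / 2 * r) = (W - t * (E - t / 2 * r)) + (t - s) * ((E - t * r) + (E - s * r)) / 2"
  by (simp add: field_simps)

locale hybrid_market =
  fixes Cs Bs :: "'i set" and p0 p1 g :: "'i \<Rightarrow> real" and tau lam A S :: real
  assumes finite_Cs: "finite Cs" and finite_Bs: "finite Bs"
    and disjoint: "Cs \<inter> Bs = {}"
    and Cs_nonempty: "Cs \<noteq> {}"
    and params: "\<forall>i\<in>Cs \<union> Bs. 0 < p0 i \<and> 0 < p1 i \<and> 0 < g i"
    and standing: "\<forall>i\<in>Cs \<union> Bs. tau * rho p1 g i < Ebau p0 p1 i \<and> lam * rho p1 g i < Ebau p0 p1 i"
    and equilibrium: "is_equilibrium Cs Bs p0 p1 g lam A S"
    and S_nonneg: "0 \<le> S" and S_le_lam: "S \<le> lam"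
    and tax_emissions: "(\<Sum>i\<in>Cs \<union> Bs. Etax p0 p1 g tau i) = A"
    and A_lower: "(Max ((\<lambda>b. Ebau p0 p1 b / rho p1 g b) ` Bs) - 2 * lam)
                  * ((\<Sum>c\<in>Cs. rho p1 g c) + 1/2 * (\<Sum>b\<in>Bs. rho p1 g b))
                + (\<Sum>c\<in>Cs. Ebau p0 p1 c) + 1/2 * (\<Sum>b\<in>Bs. Ebau p0 p1 b) \<le> A"
    and A_upper: "A < (\<Sum>c\<in>Cs. Ebau p0 p1 c)
                  + (\<Sum>b\<in>Bs. max (Ebau p0 p1 b / 2) (Ebau p0 p1 b - lam * rho p1 g b))"
begin

abbreviation E :: "'i \<Rightarrow> real" where "E \<equiv> Ebau p0 p1"
abbreviation \<rho> :: "'i \<Rightarrow> real" where "\<rho> \<equiv> rho p1 g"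
abbreviation price :: "'i \<Rightarrow> real" where "price \<equiv> Pface Bs p0 p1 g lam S"
abbreviation Pb :: "'i \<Rightarrow> real" where "Pb \<equiv> Pint p0 p1 g lam S"
abbreviation rho_total :: real where "rho_total \<equiv> \<Sum>i\<in>Cs \<union> Bs. \<rho> i"
abbreviation Ebau_total :: real where "Ebau_total \<equiv> \<Sum>i\<in>Cs \<union> Bs. E i"
abbreviation intermediated_emissions :: real where
  "intermediated_emissions \<equiv> \<Sum>b\<in>Bs. Emar p0 p1 g lam (Pb b) b"

lemma sum_Cs_Bs: "(\<Sum>i\<in>Cs \<union> Bs. f i) = (\<Sum>c\<in>Cs. f c) + (\<Sum>b\<in>Bs. f b)"
  using finite_Cs finite_Bs disjoint by (simp add: sum.union_disjoint)

lemma rho_pos: "i \<in> Cs \<union> Bs \<Longrightarrow> 0 < \<rho> i"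
  using params by (simp add: rho_def add_pos_pos)

lemma rho_total_pos: "0 < rho_total"
  using finite_Cs finite_Bs Cs_nonempty rho_pos by (intro sum_pos) auto

lemma A_less_Ebau_total: "A < Ebau_total"
proof -
  have "max (E b / 2) (E b - lam * \<rho> b) \<le> E b" if "b \<in> Bs" for b
  proof -
    have "0 < E b" "0 < \<rho> b" using that params rho_pos by (auto simp: Ebau_def)
    then show ?thesis using S_nonneg S_le_lam by simp
  qed
  then have "(\<Sum>b\<in>Bs. max (E b / 2) (E b - lam * \<rho> b)) \<le> (\<Sum>b\<in>Bs. E b)"
    by (rule sum_mono)
  then show ?thesis using A_upper sum_Cs_Bs[of E] by linarith
qed

lemma tau_pos: "0 < tau"
proof (rule ccontr)
  assume "\<not> 0 < tau"
  then have "E i \<le> Etax p0 p1 g tau i" if "i \<in> Cs \<union> Bs" for i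
    using that params by (simp add: Etax_nonpos_rate divide_nonpos_pos)
  then have "Ebau_total \<le> A"
    unfolding tax_emissions[symmetric] by (rule sum_mono)
  then show False using A_less_Ebau_total by simp
qed

lemma
  assumes "i \<in> Cs \<union> Bs"
  shows Etax_eq: "Etax p0 p1 g tau i = E i - tau * \<rho> i"
    and WtaxC_eq: "WtaxC p0 p1 g tau i = WbauC p0 p1 i - tau * (E i - tau / 2 * \<rho> i)"
  using assms params standing tau_pos by (simp_all add: Etax_nonneg_rate WtaxC_nonneg_rate)

lemma tau_eq: "tau = (Ebau_total - A) / rho_total"
proof -
  have "A = Ebau_total - tau * rho_total"
    using tax_emissions Etax_eq by (simp add: sum_subtractf sum_distrib_left)
  then show ?thesis using rho_total_pos by (simp add: field_simps)
qed

lemma sum_WtaxC: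
  "(\<Sum>i\<in>Cs \<union> Bs. WtaxC p0 p1 g tau i)
    = (\<Sum>i\<in>Cs \<union> Bs. WbauC p0 p1 i) - tau * (Ebau_total - tau / 2 * rho_total)"
  by (simp add: WtaxC_eq sum_subtractf sum_distrib_left right_diff_distrib)

lemma WtaxR_eq: "WtaxR (Cs \<union> Bs) p0 p1 g tau = tau * A"
  by (simp add: WtaxR_def tax_emissions)

lemma Pb_eq_min: "b \<in> Bs \<Longrightarrow> Pb b = min ((E b / \<rho> b + S) / 2) lam"
  using rho_pos standing S_le_lam by (simp add: Pint_eq_min)

lemma S_le: "S \<le> 2 * lam - Max ((\<lambda>b. E b / \<rho> b) ` Bs)"
proof (rule ccontr)
  define S' where "S' = 2 * lam - Max ((\<lambda>b. E b / \<rho> b) ` Bs)"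
  assume "\<not> S \<le> S'"
  then have "S' < S" unfolding S'_def by simp
  have "(\<Sum>c\<in>Cs. demand p0 p1 g S c) < (\<Sum>c\<in>Cs. E c - S' * \<rho> c)"
    using finite_Cs Cs_nonempty rho_pos \<open>S' < S\<close> by (intro sum_strict_mono) (auto simp: demand_def)
  moreover have "(\<Sum>b\<in>Bs. demand p0 p1 g (Pb b) b) \<le> (\<Sum>b\<in>Bs. (E b - S' * \<rho> b) / 2)"
  proof (rule sum_mono)
    fix b assume b: "b \<in> Bs"
    have "0 < \<rho> b" using rho_pos b by simp
    have "E b / \<rho> b \<le> Max ((\<lambda>b. E b / \<rho> b) ` Bs)" using finite_Bs b by simp
    then have "(E b / \<rho> b + S') / 2 \<le> Pb b" using b \<open>S' < S\<close> by (simp add: Pb_eq_min S'_def)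
    then have "(E b / \<rho> b + S') / 2 * \<rho> b \<le> Pb b * \<rho> b"
      using \<open>0 < \<rho> b\<close> by (simp add: mult_right_mono)
    moreover have "(E b / \<rho> b + S') / 2 * \<rho> b = (E b + S' * \<rho> b) / 2"
      using \<open>0 < \<rho> b\<close> by (simp add: field_simps)
    ultimately show "demand p0 p1 g (Pb b) b \<le> (E b - S' * \<rho> b) / 2"
      by (simp add: demand_def)
  qed
  moreover have "(\<Sum>c\<in>Cs. E c - S' * \<rho> c) + (\<Sum>b\<in>Bs. (E b - S' * \<rho> b) / 2)
      = (\<Sum>c\<in>Cs. E c) - S' * (\<Sum>c\<in>Cs. \<rho> c) + ((\<Sum>b\<in>Bs. E b) - S' * (\<Sum>b\<in>Bs. \<rho> b)) / 2"
    by (simp add: sum_subtractf sum_distrib_left flip: sum_divide_distrib)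
  moreover have "\<dots> = (Max ((\<lambda>b. E b / \<rho> b) ` Bs) - 2 * lam)
        * ((\<Sum>c\<in>Cs. \<rho> c) + 1/2 * (\<Sum>b\<in>Bs. \<rho> b)) + (\<Sum>c\<in>Cs. E c) + 1/2 * (\<Sum>b\<in>Bs. E b)"
    by (simp add: S'_def field_simps)
  ultimately show False
    using equilibrium A_lower unfolding is_equilibrium_def by linarith
qed

lemma Pb_eq: "b \<in> Bs \<Longrightarrow> Pb b = (E b / \<rho> b + S) / 2"
proof -
  assume b: "b \<in> Bs"
  have "E b / \<rho> b \<le> Max ((\<lambda>b. E b / \<rho> b) ` Bs)" using finite_Bs b by simp
  then show ?thesis using b S_le by (simp add: Pb_eq_min)
qed

lemma price_direct: "c \<in> Cs \<Longrightarrow> price c = S"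
  using disjoint by (auto simp: Pface_def)

lemma price_intermediated: "b \<in> Bs \<Longrightarrow> price b = Pb b"
  by (simp add: Pface_def)

lemma price_range: "i \<in> Cs \<union> Bs \<Longrightarrow> 0 \<le> price i \<and> price i \<le> lam"
proof -
  assume i: "i \<in> Cs \<union> Bs"
  show ?thesis
  proof (cases "i \<in> Bs")
    case True
    have "lam < E i / \<rho> i" using standing rho_pos i by (simp add: field_simps)
    then show ?thesis using True S_nonneg S_le_lam by (simp add: price_intermediated Pb_eq_min)
  qed (use i S_nonneg S_le_lam price_direct in auto)
qed

lemma
  assumes "i \<in> Cs \<union> Bs"
  shows Emar_price: "Emar p0 p1 g lam (price i) i = demand p0 p1 g (price i) i"
    and WmarC_price: "WmarC p0 p1 g lam (price i) i
      = WbauC p0 p1 i - price i * (E i - price i / 2 * \<rho> i)"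
  using assms params standing price_range by (simp_all add: Emar_eq_demand WmarC_eq)

lemma Emar_intermediated: "b \<in> Bs \<Longrightarrow> Emar p0 p1 g lam (Pb b) b = (E b - S * \<rho> b) / 2"
  using Emar_price[of b] rho_pos[of b] by (simp add: price_intermediated Pb_eq demand_def field_simps)

lemma intermediated_emissions_eq:
  "intermediated_emissions = ((\<Sum>b\<in>Bs. E b) - S * (\<Sum>b\<in>Bs. \<rho> b)) / 2"
  by (simp add: Emar_intermediated sum_subtractf sum_distrib_left flip: sum_divide_distrib)

lemma market_emissions: "(\<Sum>i\<in>Cs \<union> Bs. Emar p0 p1 g lam (price i) i) = A"
  using equilibrium Emar_price
  by (simp add: sum_Cs_Bs is_equilibrium_def price_direct price_intermediated)

lemma Emar_direct: "c \<in> Cs \<Longrightarrow> Emar p0 p1 g lam S c = E c - S * \<rho> c"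
  using Emar_price[of c] by (simp add: price_direct demand_def)

lemma tau_minus_S: "tau - S = intermediated_emissions / rho_total"
proof -
  have "A = (\<Sum>c\<in>Cs. E c) - S * (\<Sum>c\<in>Cs. \<rho> c) + intermediated_emissions"
    using market_emissions
    by (simp add: sum_Cs_Bs price_direct price_intermediated Emar_direct sum_subtractf sum_distrib_left)
  then have "tau * rho_total = S * rho_total + intermediated_emissions"
    using tau_eq rho_total_pos intermediated_emissions_eq by (simp add: sum_Cs_Bs field_simps)
  then show ?thesis using rho_total_pos by (simp add: field_simps)
qed

lemma Pb_eq_tau:
  "b \<in> Bs \<Longrightarrow> Pb b = tau / 2 + 1/2 * (E b / \<rho> b - 1 / rho_total * intermediated_emissions)"
  using tau_minus_S by (simp add: Pb_eq field_simps)

lemma S_eq: "S = (2 * rho_total * tau - (\<Sum>b\<in>Bs. E b)) / (2 * rho_total - (\<Sum>b\<in>Bs. \<rho> b))"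
proof -
  have "0 < (\<Sum>c\<in>Cs. \<rho> c)" "0 \<le> (\<Sum>b\<in>Bs. \<rho> b)"
    using finite_Cs Cs_nonempty rho_pos by (auto intro: sum_pos sum_nonneg less_imp_le)
  then have "0 < 2 * rho_total - (\<Sum>b\<in>Bs. \<rho> b)" by (simp add: sum_Cs_Bs)
  moreover have "2 * rho_total * tau - (\<Sum>b\<in>Bs. E b) = S * (2 * rho_total - (\<Sum>b\<in>Bs. \<rho> b))"
    using tau_minus_S rho_total_pos intermediated_emissions_eq by (simp add: field_simps)
  ultimately show ?thesis by simp
qed

lemma WmarC_direct:
  assumes "c \<in> Cs"
  shows "WmarC p0 p1 g lam S c = WtaxC p0 p1 g tau c
    + (Etax p0 p1 g tau c + Emar p0 p1 g lam S c) / (2 * rho_total) * intermediated_emissions"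
proof -
  have "WmarC p0 p1 g lam S c = WbauC p0 p1 c - S * (E c - S / 2 * \<rho> c)"
    using WmarC_price[of c] assms by (simp add: price_direct)
  also have "\<dots> = WtaxC p0 p1 g tau c + (tau - S) * (Etax p0 p1 g tau c + Emar p0 p1 g lam S c) / 2"
    unfolding WtaxC_eq[OF UnI1[OF assms]] Etax_eq[OF UnI1[OF assms]] Emar_direct[OF assms]
    by (rule wealth_change_of_rate)
  also have "\<dots> = WtaxC p0 p1 g tau c
      + (Etax p0 p1 g tau c + Emar p0 p1 g lam S c) / (2 * rho_total) * intermediated_emissions"
    by (simp add: tau_minus_S mult_ac)
  finally show ?thesis .
qed

lemma Pb_minus_S:
  assumes "b \<in> Bs"
  shows "Pb b - S = Emar p0 p1 g lam (Pb b) b / \<rho> b"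
proof -
  have "Pb b - S = (E b - S * \<rho> b) / 2 / \<rho> b"
    using assms rho_pos[of b] by (simp add: Pb_eq field_simps)
  then show ?thesis using assms by (simp add: Emar_intermediated)
qed

lemma WmarF_eq: "b \<in> Bs \<Longrightarrow> WmarF p0 p1 g lam S b = (Emar p0 p1 g lam (Pb b) b)\<^sup>2 / \<rho> b"
  using Emar_price[of b] by (simp add: WmarF_def price_intermediated Pb_minus_S power2_eq_square)

lemma WmarC_intermediated:
  assumes b: "b \<in> Bs"
  shows "WmarC p0 p1 g lam (Pb b) b = WtaxC p0 p1 g tau b
    + (Etax p0 p1 g tau b + Emar p0 p1 g lam (Pb b) b) / (2 * rho_total) * intermediated_emissions
    - 3/2 * WmarF p0 p1 g lam S b
    + Emar p0 p1 g lam (Pb b) b / (2 * rho_total) * intermediated_emissions"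
proof -
  define e where "e = Emar p0 p1 g lam (Pb b) b"
  define et where "et = Etax p0 p1 g tau b"
  define D where "D = intermediated_emissions"
  define R where "R = rho_total"
  have bi: "b \<in> Cs \<union> Bs" using b by simp
  have e: "e = E b - Pb b * \<rho> b"
    using Emar_price[OF bi] b by (simp add: e_def price_intermediated demand_def)
  have "WmarC p0 p1 g lam (Pb b) b = WbauC p0 p1 b - Pb b * (E b - Pb b / 2 * \<rho> b)"
    using WmarC_price[OF bi] b by (simp add: price_intermediated)
  also have "\<dots> = WtaxC p0 p1 g tau b + (tau - Pb b) * (et + e) / 2"
    unfolding WtaxC_eq[OF bi] et_def Etax_eq[OF bi] e by (rule wealth_change_of_rate)
  also have "tau - Pb b = D / R - e / \<rho> b"
    using tau_minus_S Pb_minus_S[OF b] by (simp add: D_def R_def e_def)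
  finally have "WmarC p0 p1 g lam (Pb b) b = WtaxC p0 p1 g tau b + (D / R - e / \<rho> b) * (et + e) / 2" .
  moreover have "et = 2 * e - D / R * \<rho> b"
    using \<open>tau - Pb b = D / R - e / \<rho> b\<close> rho_pos[OF bi]
    by (simp add: et_def Etax_eq[OF bi] e field_simps)
  ultimately show ?thesis
    using rho_pos[OF bi] rho_total_pos
    by (simp add: WmarF_eq[OF b] flip: e_def et_def D_def R_def) (simp add: field_simps power2_eq_square)
qed

lemma sum_WmarF:
  "(\<Sum>b\<in>Bs. WmarF p0 p1 g lam S b) = (\<Sum>b\<in>Bs. (Emar p0 p1 g lam (Pb b) b)\<^sup>2 / \<rho> b)"
  by (simp add: WmarF_eq)

lemma sum_WmarC:
  "(\<Sum>i\<in>Cs \<union> Bs. WmarC p0 p1 g lam (price i) i)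
    = (\<Sum>i\<in>Cs \<union> Bs. WtaxC p0 p1 g tau i) - 3/2 * (\<Sum>b\<in>Bs. WmarF p0 p1 g lam S b)
      + A / rho_total * intermediated_emissions + intermediated_emissions\<^sup>2 / (2 * rho_total)"
proof -
  define D where "D = intermediated_emissions"
  define R where "R = rho_total"
  have direct: "(\<Sum>c\<in>Cs. WmarC p0 p1 g lam (price c) c) = (\<Sum>c\<in>Cs. WtaxC p0 p1 g tau c)
      + ((\<Sum>c\<in>Cs. Etax p0 p1 g tau c) + (\<Sum>c\<in>Cs. Emar p0 p1 g lam (price c) c)) / (2 * R) * D"
    by (simp add: price_direct WmarC_direct sum.distrib D_def R_def
        flip: sum_distrib_right sum_divide_distrib)
  have intermediated: "(\<Sum>b\<in>Bs. WmarC p0 p1 g lam (price b) b) = (\<Sum>b\<in>Bs. WtaxC p0 p1 g tau b)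
      + ((\<Sum>b\<in>Bs. Etax p0 p1 g tau b) + D) / (2 * R) * D
      - 3/2 * (\<Sum>b\<in>Bs. WmarF p0 p1 g lam S b) + D / (2 * R) * D"
    by (simp add: price_intermediated WmarC_intermediated sum.distrib sum_subtractf D_def R_def
        flip: sum_distrib_right sum_divide_distrib sum_distrib_left)
  have tax: "(\<Sum>c\<in>Cs. Etax p0 p1 g tau c) + (\<Sum>b\<in>Bs. Etax p0 p1 g tau b) = A"
    using tax_emissions by (simp add: sum_Cs_Bs)
  have market: "(\<Sum>c\<in>Cs. Emar p0 p1 g lam (price c) c) + D = A"
    using market_emissions by (simp add: sum_Cs_Bs D_def price_intermediated)
  have "(\<Sum>i\<in>Cs \<union> Bs. WmarC p0 p1 g lam (price i) i)
      = (\<Sum>c\<in>Cs. WmarC p0 p1 g lam (price c) c) + (\<Sum>b\<in>Bs. WmarC p0 p1 g lam (price b) b)"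
    by (rule sum_Cs_Bs)
  also have "\<dots> = (\<Sum>i\<in>Cs \<union> Bs. WtaxC p0 p1 g tau i) - 3/2 * (\<Sum>b\<in>Bs. WmarF p0 p1 g lam S b)
      + (((\<Sum>c\<in>Cs. Etax p0 p1 g tau c) + (\<Sum>b\<in>Bs. Etax p0 p1 g tau b))
         + ((\<Sum>c\<in>Cs. Emar p0 p1 g lam (price c) c) + D) + D) / (2 * R) * D"
    using rho_total_pos unfolding direct intermediated sum_Cs_Bs[of "WtaxC p0 p1 g tau"]
    by (simp add: R_def field_simps)
  also have "\<dots> = (\<Sum>i\<in>Cs \<union> Bs. WtaxC p0 p1 g tau i) - 3/2 * (\<Sum>b\<in>Bs. WmarF p0 p1 g lam S b)
      + (A + A + D) / (2 * R) * D"
    unfolding tax market ..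
  also have "\<dots> = (\<Sum>i\<in>Cs \<union> Bs. WtaxC p0 p1 g tau i) - 3/2 * (\<Sum>b\<in>Bs. WmarF p0 p1 g lam S b)
      + A / R * D + D\<^sup>2 / (2 * R)"
    using rho_total_pos by (simp add: R_def field_simps power2_eq_square)
  finally show ?thesis by (simp only: D_def R_def)
qed

lemma WmarR_eq:
  "WmarR (Cs \<union> Bs) Bs p0 p1 g lam A S
    = WtaxR (Cs \<union> Bs) p0 p1 g tau - A / rho_total * intermediated_emissions"
proof -
  have "WmarR (Cs \<union> Bs) Bs p0 p1 g lam A S = S * A"
    by (simp add: WmarR_def Emar_price)
  also have "\<dots> = tau * A - (tau - S) * A"
    by (simp add: algebra_simps)
  finally show ?thesis
    by (simp add: WtaxR_eq tau_minus_S)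
qed

end

theorem theoremB1:
  fixes Cs Bs :: "'i set"
    and p0 p1 g :: "'i \<Rightarrow> real"
    and tau lam A S :: real
  assumes fin: "finite Cs" "finite Bs"
    and disj: "Cs \<inter> Bs = {}"
    and hybrid: "Cs \<noteq> {}" "Bs \<noteq> {}"
    and params: "\<forall>i\<in>Cs \<union> Bs. 0 < p0 i \<and> 0 < p1 i \<and> 0 < g i"
    and standing: "\<forall>i\<in>Cs \<union> Bs. tau * rho p1 g i < Ebau p0 p1 i \<and> lam * rho p1 g i < Ebau p0 p1 i"
    and eq: "is_equilibrium Cs Bs p0 p1 g lam A S"
    and S_range: "0 \<le> S" "S \<le> lam"
    and tax_emis: "(\<Sum>i\<in>Cs \<union> Bs. Etax p0 p1 g tau i) = A"
    and mar_emis: "(\<Sum>i\<in>Cs \<union> Bs. Emar p0 p1 g lam (Pface Bs p0 p1 g lam S i) i) = A"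
    and lower: "(Max ((\<lambda>b. Ebau p0 p1 b / rho p1 g b) ` Bs) - 2 * lam)
                  * ((\<Sum>c\<in>Cs. rho p1 g c) + 1/2 * (\<Sum>b\<in>Bs. rho p1 g b))
                + (\<Sum>c\<in>Cs. Ebau p0 p1 c) + 1/2 * (\<Sum>b\<in>Bs. Ebau p0 p1 b) \<le> A"
    and upper: "A < (\<Sum>c\<in>Cs. Ebau p0 p1 c)
                  + (\<Sum>b\<in>Bs. max (Ebau p0 p1 b / 2) (Ebau p0 p1 b - lam * rho p1 g b))"
  shows
    \<comment> \<open>Tax scheme\<close>
    "tau = ((\<Sum>i\<in>Cs \<union> Bs. Ebau p0 p1 i) - A) / (\<Sum>i\<in>Cs \<union> Bs. rho p1 g i)
     \<and> (\<forall>i\<in>Cs \<union> Bs. WtaxC p0 p1 g tau i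
            = WbauC p0 p1 i - tau * (Ebau p0 p1 i - tau / 2 * rho p1 g i))
     \<and> (\<Sum>i\<in>Cs \<union> Bs. WtaxC p0 p1 g tau i)
            = (\<Sum>i\<in>Cs \<union> Bs. WbauC p0 p1 i)
              - tau * ((\<Sum>i\<in>Cs \<union> Bs. Ebau p0 p1 i) - tau / 2 * (\<Sum>i\<in>Cs \<union> Bs. rho p1 g i))
     \<and> WtaxR (Cs \<union> Bs) p0 p1 g tau = tau * A
     \<comment> \<open>Market scheme: direct buyers\<close>
     \<and> (\<forall>c\<in>Cs. Pface Bs p0 p1 g lam S c = S
          \<and> S = (2 * (\<Sum>i\<in>Cs \<union> Bs. rho p1 g i) * tau - (\<Sum>b\<in>Bs. Ebau p0 p1 b))
                / (2 * (\<Sum>i\<in>Cs \<union> Bs. rho p1 g i) - (\<Sum>b\<in>Bs. rho p1 g b))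
          \<and> WmarC p0 p1 g lam S c
              = WtaxC p0 p1 g tau c
                + (Etax p0 p1 g tau c + Emar p0 p1 g lam S c) / (2 * (\<Sum>i\<in>Cs \<union> Bs. rho p1 g i))
                  * (\<Sum>b\<in>Bs. Emar p0 p1 g lam (Pint p0 p1 g lam S b) b))
     \<comment> \<open>Market scheme: companies buying through intermediaries\<close>
     \<and> (\<forall>b\<in>Bs. Pint p0 p1 g lam S b
              = tau / 2 + 1/2 * (Ebau p0 p1 b / rho p1 g b
                  - 1 / (\<Sum>i\<in>Cs \<union> Bs. rho p1 g i)
                    * (\<Sum>\<beta>\<in>Bs. Emar p0 p1 g lam (Pint p0 p1 g lam S \<beta>) \<beta>))
          \<and> WmarF p0 p1 g lam S b = (Emar p0 p1 g lam (Pint p0 p1 g lam S b) b)^2 / rho p1 g b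
          \<and> WmarC p0 p1 g lam (Pint p0 p1 g lam S b) b
              = WtaxC p0 p1 g tau b
                + (Etax p0 p1 g tau b + Emar p0 p1 g lam (Pint p0 p1 g lam S b) b)
                    / (2 * (\<Sum>i\<in>Cs \<union> Bs. rho p1 g i))
                  * (\<Sum>\<beta>\<in>Bs. Emar p0 p1 g lam (Pint p0 p1 g lam S \<beta>) \<beta>)
                - 3/2 * WmarF p0 p1 g lam S b
                + Emar p0 p1 g lam (Pint p0 p1 g lam S b) b / (2 * (\<Sum>i\<in>Cs \<union> Bs. rho p1 g i))
                  * (\<Sum>\<beta>\<in>Bs. Emar p0 p1 g lam (Pint p0 p1 g lam S \<beta>) \<beta>))
     \<comment> \<open>Aggregates\<close>
     \<and> (\<Sum>b\<in>Bs. WmarF p0 p1 g lam S b)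
          = (\<Sum>b\<in>Bs. (Emar p0 p1 g lam (Pint p0 p1 g lam S b) b)^2 / rho p1 g b)
     \<and> (\<Sum>i\<in>Cs \<union> Bs. WmarC p0 p1 g lam (Pface Bs p0 p1 g lam S i) i)
          = (\<Sum>i\<in>Cs \<union> Bs. WtaxC p0 p1 g tau i)
            - 3/2 * (\<Sum>b\<in>Bs. WmarF p0 p1 g lam S b)
            + A / (\<Sum>i\<in>Cs \<union> Bs. rho p1 g i) * (\<Sum>b\<in>Bs. Emar p0 p1 g lam (Pint p0 p1 g lam S b) b)
            + (\<Sum>b\<in>Bs. Emar p0 p1 g lam (Pint p0 p1 g lam S b) b)^2 / (2 * (\<Sum>i\<in>Cs \<union> Bs. rho p1 g i))
     \<and> WmarR (Cs \<union> Bs) Bs p0 p1 g lam A S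
          = WtaxR (Cs \<union> Bs) p0 p1 g tau
            - A / (\<Sum>i\<in>Cs \<union> Bs. rho p1 g i) * (\<Sum>b\<in>Bs. Emar p0 p1 g lam (Pint p0 p1 g lam S b) b)"
proof -
  interpret hybrid_market Cs Bs p0 p1 g tau lam A S
    using fin disj hybrid(1) params standing eq S_range tax_emis lower upper by unfold_locales
  show ?thesis
    using tau_eq WtaxC_eq sum_WtaxC WtaxR_eq price_direct S_eq WmarC_direct
      Pb_eq_tau WmarF_eq WmarC_intermediated sum_WmarF sum_WmarC WmarR_eq
    by blast
qed

end
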